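(* Let $G$ be a $\mathbb{Z}$-graded commutative ring with $G_i=0$ for all $i>0$, and let $H$ be a graded $G$-module such that $H_i$ is an artinian $G_0$-module for all $i\gg0$. Let $X:H\to H$ be a homogeneous $G$-linear map of negative degree. If $\ker(X)$ is almost artinian as a $G$-module, then $H$ is almost artinian as a $G[X]$-module (where the polynomial variable $X$ acts on $H$ via the map $X$).
   Context: For a graded $G$-module $H$ and an integer $r$, $H_{<r}=\bigoplus_{i<r}H_i$ is a graded $G$-submodule and $H_{\ge r}:=H/H_{<r}$. A graded module $H$ over such a ring is almost artinian if there is an integer $r$ such that $H_{\ge r}$ is artinian as a module over that ring. *)

theory Defs
  imports Main "HOL-Computational_Algebra.Polynomial"
begin

text \<open>A Z-graded commutative ring: the ring is the type 'g, the homogeneous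
components are the additive subgroups Gr i, and every element is uniquely a
finitely supported sum of homogeneous components (internal direct sum).\<close>

definition additive_subgroup :: "'a::ab_group_add set \<Rightarrow> bool" where
  "additive_subgroup A \<longleftrightarrow> 0 \<in> A \<and> (\<forall>x\<in>A. \<forall>y\<in>A. x + y \<in> A) \<and> (\<forall>x\<in>A. - x \<in> A)"

definition direct_sum_decomp :: "(int \<Rightarrow> 'a::ab_group_add set) \<Rightarrow> bool" where
  "direct_sum_decomp A \<longleftrightarrow>
     (\<forall>x. \<exists>!f. finite {i. f i \<noteq> 0} \<and> (\<forall>i. f i \<in> A i) \<and> x = (\<Sum>i\<in>{i. f i \<noteq> 0}. f i))"

definition graded_ring :: "(int \<Rightarrow> 'g::comm_ring_1 set) \<Rightarrow> bool" where
  "graded_ring Gr \<longleftrightarrow> (\<forall>i. additive_subgroup (Gr i)) \<and> 1 \<in> Gr 0 \<and>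
     (\<forall>i j. \<forall>a\<in>Gr i. \<forall>b\<in>Gr j. a * b \<in> Gr (i + j)) \<and> direct_sum_decomp Gr"

definition graded_module ::
  "(int \<Rightarrow> 'g::comm_ring_1 set) \<Rightarrow> ('g \<Rightarrow> 'h::ab_group_add \<Rightarrow> 'h) \<Rightarrow> (int \<Rightarrow> 'h set) \<Rightarrow> bool" where
  "graded_module Gr sc Hr \<longleftrightarrow> module sc \<and> (\<forall>i. additive_subgroup (Hr i)) \<and>
     (\<forall>i j. \<forall>a\<in>Gr i. \<forall>x\<in>Hr j. sc a x \<in> Hr (i + j)) \<and> direct_sum_decomp Hr"

definition submod :: "'r set \<Rightarrow> ('r \<Rightarrow> 'h::ab_group_add \<Rightarrow> 'h) \<Rightarrow> 'h set \<Rightarrow> bool" where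
  "submod R act N \<longleftrightarrow> additive_subgroup N \<and> (\<forall>r\<in>R. \<forall>x\<in>N. act r x \<in> N)"

text \<open>The quotient module M/N (N \<subseteq> M submodules) is artinian, i.e. satisfies the
descending chain condition on submodules; submodules of M/N are identified with
the submodules of M containing N (correspondence theorem).\<close>

definition artinian_quot ::
  "'r set \<Rightarrow> ('r \<Rightarrow> 'h::ab_group_add \<Rightarrow> 'h) \<Rightarrow> 'h set \<Rightarrow> 'h set \<Rightarrow> bool" where
  "artinian_quot R act M N \<longleftrightarrow>
     (\<forall>C :: nat \<Rightarrow> 'h set.
        (\<forall>n. submod R act (C n) \<and> N \<subseteq> C n \<and> C n \<subseteq> M \<and> C (Suc n) \<subseteq> C n) \<longrightarrow>
        (\<exists>k. \<forall>n\<ge>k. C n = C k))"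

definition lower_part :: "(int \<Rightarrow> 'h::ab_group_add set) \<Rightarrow> int \<Rightarrow> 'h set" where
  "lower_part Hr r = {x. \<exists>f I. finite I \<and> (\<forall>i\<in>I. i < r \<and> f i \<in> Hr i) \<and> x = (\<Sum>i\<in>I. f i)}"

text \<open>A graded module with components Hr is almost artinian over the ring acting
via act (scalars R): H_{\<ge>r} = H / H_{<r} is artinian for some r.  M is the
underlying module (as a subset of the ambient type).\<close>

definition almost_artinian ::
  "'r set \<Rightarrow> ('r \<Rightarrow> 'h::ab_group_add \<Rightarrow> 'h) \<Rightarrow> 'h set \<Rightarrow> (int \<Rightarrow> 'h set) \<Rightarrow> bool" where
  "almost_artinian R act M Hr \<longleftrightarrow> (\<exists>r. artinian_quot R act M (lower_part Hr r))"

definition poly_act :: "('g::comm_ring_1 \<Rightarrow> 'h::ab_group_add \<Rightarrow> 'h) \<Rightarrow> ('h \<Rightarrow> 'h) \<Rightarrow> 'g poly \<Rightarrow> 'h \<Rightarrow> 'h" where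
  "poly_act sc X p h = (\<Sum>i\<le>degree p. sc (coeff p i) ((X ^^ i) h))"

end

theory Submission
  imports Defs "HOL-Library.Set_Algebras"
begin

(* Let K = ker X, r0 a degree with K/K_{<r0} artinian, and r >= r0 a degree beyond which
   every component H_i is an artinian G_0-module.  Put L = H_{<r}.

   1. The modules P_m = K + H_{<r+m} (ker_plus_lower r m) climb from P_0 to P_{-d} in
      finitely many steps: P_0/L is a quotient of K/K_{<r0}, and P_{m+1}/P_m is a quotient
      of the single component H_{r+m}.  Artinian quotients compose, so S = P_{-d}
      satisfies: S/L is an artinian G-module.
   2. Because X lowers degrees by |d|, every x with X x in L lies in S, and X is nilpotent
      modulo L.
   3. A general criterion (artinian_quot_poly_act) then shows that H/L is artinian over
      G[X]: for a descending chain C_n of G[X]-submodules the family S /\ (X^k C_n + L)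
      stabilises in n uniformly in k, and nilpotency transfers this to C_n itself. *)

subsection \<open>Additive subgroups and submodules\<close>

lemma additive_subgroup_zero: "additive_subgroup A \<Longrightarrow> 0 \<in> A"
  unfolding additive_subgroup_def by blast

lemma additive_subgroup_add: "additive_subgroup A \<Longrightarrow> x \<in> A \<Longrightarrow> y \<in> A \<Longrightarrow> x + y \<in> A"
  unfolding additive_subgroup_def by blast

lemma additive_subgroup_neg: "additive_subgroup A \<Longrightarrow> x \<in> A \<Longrightarrow> - x \<in> A"
  unfolding additive_subgroup_def by blast

lemma additive_subgroup_diff: "additive_subgroup A \<Longrightarrow> x \<in> A \<Longrightarrow> y \<in> A \<Longrightarrow> x - y \<in> A"
  using additive_subgroup_add[of A x "- y"] additive_subgroup_neg[of A y] by simp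

lemma submod_subgroup: "submod R act A \<Longrightarrow> additive_subgroup A"
  unfolding submod_def by blast

lemma submod_act: "submod R act A \<Longrightarrow> r \<in> R \<Longrightarrow> x \<in> A \<Longrightarrow> act r x \<in> A"
  unfolding submod_def by blast

lemma submod_Int: "submod R act A \<Longrightarrow> submod R act B \<Longrightarrow> submod R act (A \<inter> B)"
  unfolding submod_def additive_subgroup_def by blast

lemma submod_subset_scalars: "submod R act A \<Longrightarrow> R' \<subseteq> R \<Longrightarrow> submod R' act A"
  unfolding submod_def by blast

lemma submod_plus:
  assumes A: "submod R act A" and B: "submod R act B"
    and lin: "\<And>r x y. r \<in> R \<Longrightarrow> act r (x + y) = act r x + act r y"
  shows "submod R act (A + B)"
proof -
  note A' = submod_subgroup[OF A] and B' = submod_subgroup[OF B]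
  show ?thesis
    unfolding submod_def additive_subgroup_def
  proof (intro conjI ballI)
    show "0 \<in> A + B"
      using set_plus_intro[OF additive_subgroup_zero[OF A'] additive_subgroup_zero[OF B']] by simp
  next
    fix x y assume "x \<in> A + B" "y \<in> A + B"
    then obtain a b a' b' where "x = a + b" "y = a' + b'" "a \<in> A" "b \<in> B" "a' \<in> A" "b' \<in> B"
      by (auto elim!: set_plus_elim)
    moreover have "x + y = (a + a') + (b + b')" using calculation by (simp add: ac_simps)
    ultimately show "x + y \<in> A + B"
      by (metis set_plus_intro additive_subgroup_add A' B')
  next
    fix x assume "x \<in> A + B"
    then obtain a b where "x = a + b" "a \<in> A" "b \<in> B" by (auto elim!: set_plus_elim)
    then show "- x \<in> A + B"
      using set_plus_intro[OF additive_subgroup_neg[OF A'] additive_subgroup_neg[OF B']] by simp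
  next
    fix r x assume "r \<in> R" "x \<in> A + B"
    then obtain a b where "x = a + b" "a \<in> A" "b \<in> B" by (auto elim!: set_plus_elim)
    then show "act r x \<in> A + B"
      using set_plus_intro[OF submod_act[OF A \<open>r \<in> R\<close>] submod_act[OF B \<open>r \<in> R\<close>]]
        lin[OF \<open>r \<in> R\<close>]
      by simp
  qed
qed

lemma submod_image:
  assumes A: "submod R s A" and f: "module_hom s s f"
  shows "submod R s (f ` A)"
  using A unfolding submod_def additive_subgroup_def
  by (auto simp flip: module_hom.add[OF f] module_hom.neg[OF f] module_hom.scale[OF f]
           intro: image_eqI[of 0 f 0, OF module_hom.zero[OF f, symmetric]])

lemma module_hom_funpow:
  assumes f: "module_hom s s f"
  shows "module_hom s s (f ^^ k)"
proof (induction k)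
  case 0
  show ?case using module.module_hom_ident[OF module_hom.axioms(1)[OF f]] by (simp add: id_def)
next
  case (Suc k)
  show ?case unfolding funpow.simps(2) by (rule module_hom_compose[OF Suc f])
qed

subsection \<open>Artinian quotients\<close>

lemma artinian_quotI:
  assumes "\<And>C. (\<And>n. submod R act (C n)) \<Longrightarrow> (\<And>n. N \<subseteq> C n) \<Longrightarrow> (\<And>n. C n \<subseteq> M) \<Longrightarrow>
             (\<And>n. C (Suc n) \<subseteq> C n) \<Longrightarrow> \<exists>k. \<forall>n\<ge>k. C n = C k"
  shows "artinian_quot R act M N"
  unfolding artinian_quot_def
proof (intro allI impI)
  fix C :: "nat \<Rightarrow> _"
  assume "\<forall>n. submod R act (C n) \<and> N \<subseteq> C n \<and> C n \<subseteq> M \<and> C (Suc n) \<subseteq> C n"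
  then show "\<exists>k. \<forall>n\<ge>k. C n = C k" by (intro assms) blast+
qed

lemma artinian_quotD:
  assumes "artinian_quot R act M N"
    and "\<And>n. submod R act (C n)" "\<And>n. N \<subseteq> C n" "\<And>n. C n \<subseteq> M" "\<And>n. C (Suc n) \<subseteq> C n"
  shows "\<exists>k. \<forall>n\<ge>k. C n = C k"
  using assms(1)[unfolded artinian_quot_def, rule_format, of C] assms(2-5) by blast

lemma descending_chain_stable:
  assumes dec: "\<And>n. C (Suc n) \<subseteq> C n" and grow: "\<And>n. k \<le> n \<Longrightarrow> C k \<subseteq> C n"
  shows "\<exists>k. \<forall>n\<ge>k. C n = C k"
proof (intro exI allI impI)
  fix n assume "k \<le> n"
  show "C n = C k" using lift_Suc_antimono_le[of C, OF dec \<open>k \<le> n\<close>] grow[OF \<open>k \<le> n\<close>] by (rule antisym)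
qed

text \<open>If \<open>M \<subseteq> Q + N\<close>, then \<open>M/N\<close> is a quotient of \<open>Q/(Q \<inter> N)\<close>; so \<open>M/N\<close> is artinian as
  soon as \<open>Q/N'\<close> is, for some \<open>N' \<subseteq> Q \<inter> N\<close>, even over a smaller ring of scalars.\<close>

lemma artinian_quot_by_cover:
  assumes art: "artinian_quot R' act Q N'" and R': "R' \<subseteq> R" and Q: "submod R' act Q"
    and N': "N' \<subseteq> N" "N' \<subseteq> Q" and cover: "M \<subseteq> Q + N"
  shows "artinian_quot R act M N"
proof (rule artinian_quotI)
  fix C assume sub: "\<And>n. submod R act (C n)" and NC: "\<And>n. N \<subseteq> C n"
    and CM: "\<And>n. C n \<subseteq> M" and dec: "\<And>n. C (Suc n) \<subseteq> C n"
  have D_sub: "submod R' act (C n \<inter> Q)" for n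
    using submod_Int[OF submod_subset_scalars[OF sub R'] Q] .
  have D_N': "N' \<subseteq> C n \<inter> Q" for n using N' NC by blast
  have D_dec: "C (Suc n) \<inter> Q \<subseteq> C n \<inter> Q" for n using dec by blast
  obtain k where k: "\<And>n. k \<le> n \<Longrightarrow> C n \<inter> Q = C k \<inter> Q"
    using artinian_quotD[where C = "\<lambda>n. C n \<inter> Q", OF art D_sub D_N' Int_lower2 D_dec] by blast
  have "C k \<subseteq> C n" if "k \<le> n" for n
  proof
    fix x assume x: "x \<in> C k"
    then obtain q l where ql: "x = q + l" "q \<in> Q" "l \<in> N"
      using cover CM by (blast elim: set_plus_elim)
    have "q = x - l" using ql(1) by simp
    then have "q \<in> C k \<inter> Q" using x ql(2,3) NC additive_subgroup_diff[OF submod_subgroup[OF sub]] by blast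
    then have "q \<in> C n" using k[OF that] by blast
    then show "x \<in> C n" using ql NC additive_subgroup_add[OF submod_subgroup[OF sub]] by blast
  qed
  then show "\<exists>k. \<forall>n\<ge>k. C n = C k" by (rule descending_chain_stable[of C, OF dec])
qed

text \<open>A chain \<open>C\<close> is controlled by the chains \<open>C \<inter> P\<close> and \<open>C + P\<close>.\<close>

lemma artinian_quot_trans:
  assumes PN: "artinian_quot R act P N" and MP: "artinian_quot R act M P"
    and P: "submod R act P" and M: "submod R act M" and "N \<subseteq> P" "P \<subseteq> M"
    and lin: "\<And>r x y. r \<in> R \<Longrightarrow> act r (x + y) = act r x + act r y"
  shows "artinian_quot R act M N"
proof (rule artinian_quotI)
  fix C assume sub: "\<And>n. submod R act (C n)" and NC: "\<And>n. N \<subseteq> C n"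
    and CM: "\<And>n. C n \<subseteq> M" and dec: "\<And>n. C (Suc n) \<subseteq> C n"
  note C_grp = submod_subgroup[OF sub]
  have D_N: "N \<subseteq> C n \<inter> P" for n using NC \<open>N \<subseteq> P\<close> by blast
  have D_dec: "C (Suc n) \<inter> P \<subseteq> C n \<inter> P" for n using dec by blast
  obtain k1 where k1: "\<And>n. k1 \<le> n \<Longrightarrow> C n \<inter> P = C k1 \<inter> P"
    using artinian_quotD[where C = "\<lambda>n. C n \<inter> P", OF PN submod_Int[OF sub P] D_N Int_lower2 D_dec] by blast
  have E_sub: "submod R act (C n + P)" for n using submod_plus[OF sub P] lin by blast
  have E_P: "P \<subseteq> C n + P" for n
    using set_plus_intro[OF additive_subgroup_zero[OF C_grp]] by fastforce
  have E_M: "C n + P \<subseteq> M" for n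
    using CM additive_subgroup_add[OF submod_subgroup[OF M]] \<open>P \<subseteq> M\<close> by (blast elim: set_plus_elim)
  have E_dec: "C (Suc n) + P \<subseteq> C n + P" for n using set_plus_mono2[OF dec order_refl] .
  obtain k2 where k2: "\<And>n. k2 \<le> n \<Longrightarrow> C n + P = C k2 + P"
    using artinian_quotD[where C = "\<lambda>n. C n + P", OF MP E_sub E_P E_M E_dec] by blast
  define k where "k = max k1 k2"
  have "C k \<subseteq> C n" if "k \<le> n" for n
  proof
    fix x assume x: "x \<in> C k"
    have "x \<in> C k + P" using set_plus_intro[OF x additive_subgroup_zero[OF submod_subgroup[OF P]]] by simp
    also have "C k + P = C n + P" using k2 that k_def by (metis max.bounded_iff order_refl)
    finally obtain c p where cp: "x = c + p" "c \<in> C n" "p \<in> P" by (blast elim: set_plus_elim)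
    have "c \<in> C k" using cp(2) lift_Suc_antimono_le[of C, OF dec that] by blast
    then have "p \<in> C k \<inter> P" using x cp additive_subgroup_diff[OF C_grp, of x k c] by (simp add: algebra_simps)
    also have "C k \<inter> P = C n \<inter> P" using k1 that k_def by (metis max.bounded_iff order_refl)
    finally show "x \<in> C n" using cp additive_subgroup_add[OF C_grp] by blast
  qed
  then show "\<exists>k. \<forall>n\<ge>k. C n = C k" by (rule descending_chain_stable[of C, OF dec])
qed

text \<open>A family \<open>F n k\<close>, descending in both indices, whose columns \<open>F _ k\<close> and whose diagonal
  \<open>F n n\<close> stabilise, is eventually independent of \<open>n\<close>, uniformly in \<open>k\<close>: beyond the diagonal
  bound every entry equals the diagonal limit, and the finitely many smaller columns
  stabilise separately.\<close>

lemma doubly_descending_stable: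
  fixes F :: "nat \<Rightarrow> nat \<Rightarrow> 'a set"
  assumes dec_n: "\<And>n k. F (Suc n) k \<subseteq> F n k" and dec_k: "\<And>n k. F n (Suc k) \<subseteq> F n k"
    and col: "\<And>k. \<exists>m. \<forall>n\<ge>m. F n k = F m k" and diag: "\<exists>m. \<forall>n\<ge>m. F n n = F m m"
  shows "\<exists>n0. \<forall>n\<ge>n0. \<forall>k. F n k = F n0 k"
proof -
  have mono: "F n' k' \<subseteq> F n k" if "n \<le> n'" "k \<le> k'" for n n' k k'
    using lift_Suc_antimono_le[of "\<lambda>n. F n k'", OF dec_n that(1)]
      lift_Suc_antimono_le[of "F n", OF dec_k that(2)] by (rule order_trans)
  obtain n2 where n2: "\<forall>n\<ge>n2. F n n = F n2 n2" using diag ..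
  obtain m where m: "\<forall>k. \<forall>n\<ge>m k. F n k = F (m k) k" using choice[OF allI[OF col]] ..
  have beyond_diag: "F n k = F n2 n2" if "n2 \<le> n" "n2 \<le> k" for n k
  proof (cases "n \<le> k")
    case True
    then have "F k k \<subseteq> F n k" "F n k \<subseteq> F n n" using mono[of n k k k] mono[of n n n k] by simp_all
    moreover have "F k k = F n2 n2" "F n n = F n2 n2" using n2 that by blast+
    ultimately show ?thesis by blast
  next
    case False
    then have "F n n \<subseteq> F n k" "F n k \<subseteq> F k k" using mono[of n n k n] mono[of k n k k] by simp_all
    moreover have "F k k = F n2 n2" "F n n = F n2 n2" using n2 that by blast+
    ultimately show ?thesis by blast
  qed
  define n0 where "n0 = max n2 (Max (insert 0 (m ` {..<n2})))"
  have "F n k = F n0 k" if "n0 \<le> n" for n k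
  proof (cases "k < n2")
    case True
    then have "m k \<le> n0" unfolding n0_def by (simp add: le_max_iff_disj)
    then have "F n0 k = F (m k) k" by (rule m[rule_format])
    moreover have "F n k = F (m k) k" using \<open>m k \<le> n0\<close> that by (intro m[rule_format]) linarith
    ultimately show ?thesis by simp
  next
    case False
    have "n2 \<le> n0" unfolding n0_def by simp
    then have "F n k = F n2 n2" "F n0 k = F n2 n2"
      using beyond_diag[of n k] beyond_diag[of n0 k] False that by linarith+
    then show ?thesis by (rule trans[OF _ sym])
  qed
  then show ?thesis by blast
qed

lemma poly_act_const: "module sc \<Longrightarrow> poly_act sc X [:a:] x = sc a x"
  unfolding poly_act_def by simp

lemma poly_act_X: "module sc \<Longrightarrow> poly_act sc X [:0, 1:] x = X x"
  unfolding poly_act_def by (simp add: module.scale_zero_left module.scale_one)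

lemma poly_act_submod_scalars:
  assumes sc: "module sc" and C: "submod UNIV (poly_act sc X) C"
  shows "submod UNIV sc C"
  using C poly_act_const[OF sc, of X] unfolding submod_def by (metis UNIV_I)

lemma poly_act_submod_X:
  assumes sc: "module sc" and C: "submod UNIV (poly_act sc X) C" and "c \<in> C"
  shows "X c \<in> C"
  using submod_act[OF C UNIV_I \<open>c \<in> C\<close>, of "[:0, 1:]"] poly_act_X[OF sc] by simp

text \<open>By induction on the least \<open>j\<close> with \<open>X\<^sup>j(x) \<in> L\<close>:
  then \<open>X\<^sup>j\<^sup>-\<^sup>1(x) \<in> S\<close>, so \<open>x\<close> differs from some \<open>c \<in> C'\<close> by an element reaching \<open>L\<close> sooner.\<close>

lemma subgroup_eq_by_levels:
  assumes X: "module_hom sc sc X"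
    and C: "additive_subgroup C" and C': "additive_subgroup C'" and "C' \<subseteq> C"
    and L: "0 \<in> L" "L \<subseteq> C'"
    and preimage: "\<And>x. X x \<in> L \<Longrightarrow> x \<in> S"
    and nilpotent: "\<And>x. \<exists>j. (X ^^ j) x \<in> L"
    and levels: "\<And>j. S \<inter> ((X ^^ j) ` C + L) \<subseteq> (X ^^ j) ` C' + L"
  shows "C \<subseteq> C'"
proof -
  note Xj = module_hom_funpow[OF X]
  have "\<forall>x\<in>C. (X ^^ j) x \<in> L \<longrightarrow> x \<in> C'" for j
  proof (induction j)
    case 0
    show ?case using L by auto
  next
    case (Suc j)
    show ?case
    proof (intro ballI impI)
      fix x assume x: "x \<in> C" and "(X ^^ Suc j) x \<in> L"
      then have "(X ^^ j) x \<in> S" using preimage by simp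
      moreover have "(X ^^ j) x + 0 \<in> (X ^^ j) ` C + L"
        using set_plus_intro[OF imageI[OF x] L(1)] .
      ultimately have "(X ^^ j) x \<in> (X ^^ j) ` C' + L" using levels by auto
      then obtain c l where cl: "c \<in> C'" "l \<in> L" "(X ^^ j) x = (X ^^ j) c + l"
        by (auto elim!: set_plus_elim)
      have "x - c \<in> C" using additive_subgroup_diff[OF C x] cl(1) \<open>C' \<subseteq> C\<close> by blast
      moreover have "(X ^^ j) (x - c) \<in> L" using cl(2,3) module_hom.diff[OF Xj] by simp
      ultimately have "x - c \<in> C'" using Suc.IH by blast
      then show "x \<in> C'" using additive_subgroup_add[OF C' _ cl(1)] by fastforce
    qed
  qed
  then show ?thesis using nilpotent by blast
qed

lemma levels_family:
  assumes sc: "module sc" and X: "module_hom sc sc X"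
    and L: "submod UNIV sc L" and S: "submod UNIV sc S" and LS: "L \<subseteq> S"
    and C_sc: "\<And>n. submod UNIV sc (C n)" and C_X: "\<And>n c. c \<in> C n \<Longrightarrow> X c \<in> C n"
    and dec: "\<And>n. C (Suc n) \<subseteq> C n"
  defines "F n k \<equiv> S \<inter> ((X ^^ k) ` C n + L)"
  shows "submod UNIV sc (F n k)" and "L \<subseteq> F n k" and "F n k \<subseteq> S"
    and "F (Suc n) k \<subseteq> F n k" and "F n (Suc k) \<subseteq> F n k"
proof -
  have lin: "sc r (x + y) = sc r x + sc r y" for r x y
    by (rule module.scale_right_distrib[OF sc])
  show "submod UNIV sc (F n k)"
    unfolding F_def by (intro submod_Int S submod_plus submod_image C_sc module_hom_funpow X L lin)
  show "L \<subseteq> F n k"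
  proof
    fix l assume "l \<in> L"
    have "0 \<in> (X ^^ k) ` C n"
      using additive_subgroup_zero[OF submod_subgroup[OF C_sc]]
        module_hom.zero[OF module_hom_funpow[OF X]]
      by (metis image_eqI)
    then have "0 + l \<in> (X ^^ k) ` C n + L" using \<open>l \<in> L\<close> by (rule set_plus_intro)
    then show "l \<in> F n k" unfolding F_def using LS \<open>l \<in> L\<close> by auto
  qed
  show "F n k \<subseteq> S" unfolding F_def by blast
  show "F (Suc n) k \<subseteq> F n k"
    unfolding F_def by (intro Int_mono order_refl set_plus_mono2 image_mono dec)
  have "(X ^^ Suc k) ` C n \<subseteq> (X ^^ k) ` C n"
  proof
    fix y assume "y \<in> (X ^^ Suc k) ` C n"
    then obtain c where "c \<in> C n" "y = (X ^^ k) (X c)"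
      by (auto simp: funpow_Suc_right simp del: funpow.simps(2))
    then show "y \<in> (X ^^ k) ` C n" using C_X by blast
  qed
  then show "F n (Suc k) \<subseteq> F n k" unfolding F_def by (intro Int_mono order_refl set_plus_mono2)
qed

text \<open>For a descending chain \<open>C\<close> of polynomial submodules over \<open>L\<close>, the levels
  \<open>S \<inter> (X\<^sup>k(C n) + L)\<close> stabilise in \<open>n\<close> uniformly in \<open>k\<close>, because \<open>S/L\<close> is artinian;
  then \<open>C\<close> itself stabilises by the comparison lemma above.\<close>

lemma artinian_quot_poly_act:
  assumes sc: "module sc" and X: "module_hom sc sc X"
    and L: "submod UNIV sc L" and S: "submod UNIV sc S" and LS: "L \<subseteq> S"
    and art: "artinian_quot UNIV sc S L"
    and preimage: "\<And>x. X x \<in> L \<Longrightarrow> x \<in> S"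
    and nilpotent: "\<And>x. \<exists>j. (X ^^ j) x \<in> L"
  shows "artinian_quot UNIV (poly_act sc X) UNIV L"
proof (rule artinian_quotI)
  fix C assume sub: "\<And>n. submod UNIV (poly_act sc X) (C n)" and LC: "\<And>n. L \<subseteq> C n"
    and dec: "\<And>n. C (Suc n) \<subseteq> C n"
  note C_sc = poly_act_submod_scalars[OF sc sub] and C_X = poly_act_submod_X[OF sc sub]
  define F where "F n k = S \<inter> ((X ^^ k) ` C n + L)" for n k
  note F = levels_family[where C = C, OF sc X L S LS C_sc C_X dec, folded F_def]
  have col: "\<exists>m. \<forall>n\<ge>m. F n k = F m k" for k
    by (rule artinian_quotD[where C = "\<lambda>n. F n k", OF art F(1-4)])
  have diag: "\<exists>m. \<forall>n\<ge>m. F n n = F m m"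
    by (rule artinian_quotD[where C = "\<lambda>n. F n n", OF art F(1-3) order_trans[OF F(5) F(4)]])
  obtain n0 where n0: "\<And>n k. n0 \<le> n \<Longrightarrow> F n k = F n0 k"
    using doubly_descending_stable[OF F(4) F(5) col diag] by blast
  have "C n0 \<subseteq> C n" if "n0 \<le> n" for n
  proof (rule subgroup_eq_by_levels[OF X submod_subgroup[OF C_sc] submod_subgroup[OF C_sc]
        lift_Suc_antimono_le[of C, OF dec that] _ LC preimage nilpotent])
    show "0 \<in> L" using additive_subgroup_zero[OF submod_subgroup[OF L]] .
    show "S \<inter> ((X ^^ j) ` C n0 + L) \<subseteq> (X ^^ j) ` C n + L" for j
      using n0[OF that, of j] unfolding F_def by blast
  qed
  then show "\<exists>k. \<forall>n\<ge>k. C n = C k" by (rule descending_chain_stable[of C, OF dec])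
qed

subsection \<open>The lower parts \<open>H\<^sub><\<^sub>r\<close> of a graded group\<close>

lemma lower_part_induct [consumes 1, case_names zero add]:
  assumes "x \<in> lower_part A r" and "P 0"
    and "\<And>i y z. i < r \<Longrightarrow> y \<in> A i \<Longrightarrow> P z \<Longrightarrow> P (y + z)"
  shows "P x"
proof -
  obtain f I where fI: "finite I" "\<forall>i\<in>I. i < r \<and> f i \<in> A i" "x = (\<Sum>i\<in>I. f i)"
    using assms(1) unfolding lower_part_def by blast
  have "(\<forall>i\<in>I. i < r \<and> f i \<in> A i) \<longrightarrow> P (\<Sum>i\<in>I. f i)" using fI(1)
    by (induction I rule: finite_induct) (use assms(2,3) in auto)
  then show ?thesis using fI by simp
qed

lemma lower_part_zero: "0 \<in> lower_part A r"
  unfolding lower_part_def by (intro CollectI exI[of _ "\<lambda>_. 0"] exI[of _ "{}"]) simp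

lemma lower_part_mono:
  assumes "r \<le> s" "\<And>i. A i \<subseteq> B i"
  shows "lower_part A r \<subseteq> lower_part B s"
proof
  fix x assume "x \<in> lower_part A r"
  then obtain f I where "finite I" "\<forall>i\<in>I. i < r \<and> f i \<in> A i" "x = (\<Sum>i\<in>I. f i)"
    unfolding lower_part_def by blast
  moreover have "\<forall>i\<in>I. i < s \<and> f i \<in> B i" using calculation(2) assms by force
  ultimately show "x \<in> lower_part B s" unfolding lower_part_def by blast
qed

lemma lower_part_cons:
  assumes A: "\<And>i. additive_subgroup (A i)" and "i < r" "a \<in> A i" "w \<in> lower_part A r"
  shows "a + w \<in> lower_part A r"
proof -
  obtain f I where fI: "finite I" "\<forall>j\<in>I. j < r \<and> f j \<in> A j" "w = (\<Sum>j\<in>I. f j)"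
    using assms(4) unfolding lower_part_def by blast
  show ?thesis
  proof (cases "i \<in> I")
    case True
    have "a + f i \<in> A i" using additive_subgroup_add[OF A] True fI(2) assms(3) by blast
    moreover have "(\<Sum>j\<in>I. (f(i := a + f i)) j) = a + w"
      using True fI(1,3) by (simp add: sum.remove add.assoc)
    ultimately show ?thesis unfolding lower_part_def using fI True
      by (intro CollectI exI[of _ "f(i := a + f i)"] exI[of _ I]) auto
  next
    case False
    have "(\<Sum>j\<in>insert i I. (f(i := a)) j) = a + w"
      using False fI by (simp add: sum.insert) (rule sum.cong, auto)
    then show ?thesis unfolding lower_part_def using fI False assms(2,3)
      by (intro CollectI exI[of _ "f(i := a)"] exI[of _ "insert i I"]) auto
  qed
qed

lemma lower_part_component:
  "(\<And>i. additive_subgroup (A i)) \<Longrightarrow> i < r \<Longrightarrow> a \<in> A i \<Longrightarrow> a \<in> lower_part A r"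
  using lower_part_cons[of A i r a 0] lower_part_zero[of A r] by simp

lemma lower_part_add:
  assumes A: "\<And>i. additive_subgroup (A i)"
    and "x \<in> lower_part A r" "y \<in> lower_part A r"
  shows "x + y \<in> lower_part A r"
  using assms(2)
  by (induction rule: lower_part_induct) (auto simp: assms(3) add.assoc intro: lower_part_cons[OF A])

lemma lower_part_neg:
  assumes A: "\<And>i. additive_subgroup (A i)" and "x \<in> lower_part A r"
  shows "- x \<in> lower_part A r"
  using assms(2)
proof (induction rule: lower_part_induct)
  case zero
  show ?case by (simp add: lower_part_zero)
next
  case (add i y z)
  have "- y + - z \<in> lower_part A r"
    using lower_part_cons[OF A add.hyps(1) additive_subgroup_neg[OF A add.hyps(2)] add.IH] .
  then show ?case by (simp add: add.commute)
qed

lemma lower_part_subgroup: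
  "(\<And>i. additive_subgroup (A i)) \<Longrightarrow> additive_subgroup (lower_part A r)"
  unfolding additive_subgroup_def[of "lower_part A r"]
  by (auto simp: lower_part_zero lower_part_add lower_part_neg)

lemma lower_part_sum:
  assumes A: "\<And>i. additive_subgroup (A i)" and "finite I" "\<And>i. i \<in> I \<Longrightarrow> f i \<in> lower_part A r"
  shows "sum f I \<in> lower_part A r"
  using assms(2,3) by (induction I rule: finite_induct) (auto simp: lower_part_zero lower_part_add[OF A])

lemma lower_part_subset_subgroup:
  assumes K: "additive_subgroup K" and "\<And>i. A i \<subseteq> K"
  shows "lower_part A r \<subseteq> K"
proof
  fix x assume "x \<in> lower_part A r"
  then show "x \<in> K"
    by (induction rule: lower_part_induct) (use assms additive_subgroup_zero additive_subgroup_add in blast)+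
qed

lemma lower_part_Suc_split:
  assumes A: "\<And>i. additive_subgroup (A i)" and "l \<in> lower_part A (s + 1)"
  shows "\<exists>l' h. l' \<in> lower_part A s \<and> h \<in> A s \<and> l = l' + h"
  using assms(2)
proof (induction rule: lower_part_induct)
  case zero
  show ?case using additive_subgroup_zero[OF A] lower_part_zero by fastforce
next
  case (add i y z)
  then obtain l' h where lh: "l' \<in> lower_part A s" "h \<in> A s" "z = l' + h" by blast
  show ?case
  proof (cases "i = s")
    case True
    then have "y + h \<in> A s" using additive_subgroup_add[OF A] add.hyps(2) lh(2) by blast
    then show ?thesis using lh by (intro exI[of _ l'] exI[of _ "y + h"]) (simp add: algebra_simps)
  next
    case False
    then have "i < s" using add.hyps(1) by simp
    then have "y + l' \<in> lower_part A s" using lower_part_cons[OF A _ add.hyps(2) lh(1)] by blast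
    then show ?thesis using lh by (intro exI[of _ "y + l'"] exI[of _ h]) (simp add: algebra_simps)
  qed
qed

subsection \<open>Internal direct sums\<close>

lemma direct_sum_decomp_ex:
  assumes "direct_sum_decomp A"
  shows "\<exists>I f. finite I \<and> (\<forall>i\<in>I. f i \<in> A i) \<and> x = (\<Sum>i\<in>I. f i)"
proof -
  from assms have "\<exists>f. finite {i. f i \<noteq> 0} \<and> (\<forall>i. f i \<in> A i) \<and> x = (\<Sum>i\<in>{i. f i \<noteq> 0}. f i)"
    unfolding direct_sum_decomp_def by (blast dest: ex1_implies_ex)
  then show ?thesis by blast
qed

lemma direct_sum_decomp_lower_part:
  assumes "direct_sum_decomp A"
  shows "\<exists>s. x \<in> lower_part A s"
proof -
  obtain I f where If: "finite I" "\<forall>i\<in>I. f i \<in> A i" "x = (\<Sum>i\<in>I. f i)"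
    using direct_sum_decomp_ex[OF assms] by blast
  have "i \<le> Max (insert 0 I)" if "i \<in> I" for i using If(1) that by simp
  then have "\<forall>i\<in>I. i < Max (insert 0 I) + 1 \<and> f i \<in> A i" using If(2) by fastforce
  then show ?thesis unfolding lower_part_def using If by blast
qed

lemma direct_sum_decomp_unique:
  assumes D: "direct_sum_decomp A" and zero: "\<And>i. 0 \<in> A i"
    and I: "finite I" "\<And>i. i \<in> I \<Longrightarrow> f i \<in> A i"
    and J: "finite J" "\<And>j. j \<in> J \<Longrightarrow> g j \<in> A j"
    and eq: "(\<Sum>i\<in>I. f i) = (\<Sum>j\<in>J. g j)" and i: "i \<in> I" "i \<notin> J"
  shows "f i = 0"
proof -
  define ext where "ext K h = (\<lambda>j. if j \<in> K then h j else 0)" for K and h :: "int \<Rightarrow> 'a"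
  define rep where "rep x F \<longleftrightarrow> finite {j. F j \<noteq> 0} \<and> (\<forall>j. F j \<in> A j) \<and> x = (\<Sum>j\<in>{j. F j \<noteq> 0}. F j)"
    for x F
  have ext_rep: "rep (\<Sum>j\<in>K. h j) (ext K h)" if "finite K" "\<And>j. j \<in> K \<Longrightarrow> h j \<in> A j" for K h
  proof -
    have sub: "{j. ext K h j \<noteq> 0} \<subseteq> K" unfolding ext_def by auto
    have "(\<Sum>j\<in>K. h j) = (\<Sum>j\<in>K. ext K h j)" unfolding ext_def by simp
    also have "\<dots> = (\<Sum>j\<in>{j. ext K h j \<noteq> 0}. ext K h j)"
      by (rule sum.mono_neutral_right) (use that(1) sub in auto)
    finally show ?thesis
      unfolding rep_def using finite_subset[OF sub that(1)] that(2) zero by (auto simp: ext_def)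
  qed
  have "\<exists>!F. rep (\<Sum>i\<in>I. f i) F" using D unfolding direct_sum_decomp_def rep_def by blast
  moreover have "rep (\<Sum>i\<in>I. f i) (ext I f)" using ext_rep[OF I] .
  moreover have "rep (\<Sum>i\<in>I. f i) (ext J g)" using ext_rep[OF J] eq by simp
  ultimately have "ext I f = ext J g" unfolding ex1_iff_ex_Uniq by (blast dest: Uniq_D)
  then have "ext I f i = ext J g i" by simp
  then show ?thesis using i unfolding ext_def by simp
qed

subsection \<open>A graded module with a homogeneous endomorphism of negative degree\<close>

locale graded_endomorphism =
  fixes Gr :: "int \<Rightarrow> 'g::comm_ring_1 set"
    and sc :: "'g \<Rightarrow> 'h::ab_group_add \<Rightarrow> 'h"
    and Hr :: "int \<Rightarrow> 'h set"
    and X :: "'h \<Rightarrow> 'h"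
    and d :: int
  assumes G: "graded_ring Gr"
    and G_pos: "\<forall>i>0. Gr i = {0}"
    and H: "graded_module Gr sc Hr"
    and X_hom: "module_hom sc sc X"
    and d_neg: "d < 0"
    and X_deg: "\<forall>i. \<forall>x\<in>Hr i. X x \<in> Hr (i + d)"
begin

lemma Hr_subgroup: "additive_subgroup (Hr i)"
  using H unfolding graded_module_def by blast

lemma sc_module: "module sc"
  using H unfolding graded_module_def by blast

lemma sc_graded: "a \<in> Gr i \<Longrightarrow> x \<in> Hr j \<Longrightarrow> sc a x \<in> Hr (i + j)"
  using H unfolding graded_module_def by blast

lemma Hr_decomp: "direct_sum_decomp Hr"
  using H unfolding graded_module_def by blast

lemma Gr_decomp: "direct_sum_decomp Gr"
  using G unfolding graded_ring_def by blast

lemma X_zero [simp]: "X 0 = 0"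
  by (rule module_hom.zero[OF X_hom])

lemma sc_add: "sc a (x + y) = sc a x + sc a y"
  by (rule module.scale_right_distrib[OF sc_module])

text \<open>Since \<open>G\<close> has no components of positive degree, scalars do not raise degrees;
  hence every \<open>H\<^sub><\<^sub>r\<close> is a \<open>G\<close>-submodule.\<close>

lemma lower_part_submod: "submod UNIV sc (lower_part Hr r)"
proof -
  have homogeneous: "sc a y \<in> lower_part Hr r" if "i < r" "y \<in> Hr i" for a i y
  proof -
    obtain J g where Jg: "finite J" "\<forall>j\<in>J. g j \<in> Gr j" "a = (\<Sum>j\<in>J. g j)"
      using direct_sum_decomp_ex[OF Gr_decomp] by blast
    have "sc (g j) y \<in> lower_part Hr r" if "j \<in> J" for j
    proof (cases "j > 0")
      case True
      then have "g j = 0" using G_pos Jg(2) that by blast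
      then show ?thesis by (simp add: module.scale_zero_left[OF sc_module] lower_part_zero)
    next
      case False
      have "sc (g j) y \<in> Hr (j + i)" using sc_graded Jg(2) that \<open>y \<in> Hr i\<close> by blast
      then show ?thesis using False \<open>i < r\<close> by (intro lower_part_component[of Hr, OF Hr_subgroup]) auto
    qed
    then have "(\<Sum>j\<in>J. sc (g j) y) \<in> lower_part Hr r"
      by (intro lower_part_sum[of Hr, OF Hr_subgroup Jg(1)])
    moreover have "sc a y = (\<Sum>j\<in>J. sc (g j) y)"
      unfolding Jg(3) by (rule module.scale_sum_left[OF sc_module])
    ultimately show ?thesis by simp
  qed
  have "sc a x \<in> lower_part Hr r" if "x \<in> lower_part Hr r" for a x
    using that
  proof (induction rule: lower_part_induct)
    case zero
    show ?case by (simp add: module.scale_zero_right[OF sc_module] lower_part_zero)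
  next
    case (add i y z)
    then show ?case using homogeneous by (simp add: sc_add lower_part_add[of Hr, OF Hr_subgroup])
  qed
  then show ?thesis unfolding submod_def using lower_part_subgroup[of Hr, OF Hr_subgroup] by blast
qed

text \<open>\<open>X\<close> maps \<open>H\<^sub><\<^sub>s\<close> into \<open>H\<^sub><\<^sub>s\<^sub>+\<^sub>d\<close>; since \<open>d < 0\<close>, \<open>X\<close> is nilpotent modulo every \<open>H\<^sub><\<^sub>r\<close>.\<close>

lemma X_lower_part_shift: "x \<in> lower_part Hr s \<Longrightarrow> X x \<in> lower_part Hr (s + d)"
proof (induction rule: lower_part_induct)
  case zero
  show ?case by (simp add: lower_part_zero)
next
  case (add i y z)
  have "X y \<in> Hr (i + d)" using X_deg add.hyps(2) by blast
  then have "X y + X z \<in> lower_part Hr (s + d)"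
    using add by (intro lower_part_cons[of Hr, OF Hr_subgroup]) auto
  then show ?case by (simp add: module_hom.add[OF X_hom])
qed

lemma funpow_X_lower_part_shift:
  "x \<in> lower_part Hr s \<Longrightarrow> (X ^^ k) x \<in> lower_part Hr (s + int k * d)"
proof (induction k)
  case 0
  then show ?case by simp
next
  case (Suc k)
  have "X ((X ^^ k) x) \<in> lower_part Hr (s + int k * d + d)"
    using X_lower_part_shift[OF Suc.IH[OF Suc.prems]] .
  then show ?case by (simp add: algebra_simps)
qed

lemma X_nilpotent_mod_lower_part: "\<exists>k. (X ^^ k) x \<in> lower_part Hr r"
proof -
  obtain s where s: "x \<in> lower_part Hr s"
    using direct_sum_decomp_lower_part[OF Hr_decomp] by blast
  define k where "k = nat (s - r)"
  have "int k * d \<le> - int k" using mult_left_mono[of d "-1" "int k"] d_neg by simp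
  then have "s + int k * d \<le> r" unfolding k_def by linarith
  then have "(X ^^ k) x \<in> lower_part Hr r"
    using funpow_X_lower_part_shift[OF s] lower_part_mono[of _ r Hr Hr] by blast
  then show ?thesis ..
qed

lemma kernel_submod: "submod UNIV sc {x. X x = 0}"
  unfolding submod_def additive_subgroup_def
  by (simp add: module_hom.add[OF X_hom] module_hom.neg[OF X_hom] module_hom.scale[OF X_hom]
      module.scale_zero_right[OF module_hom.axioms(2)[OF X_hom]])

definition ker_plus_lower :: "int \<Rightarrow> nat \<Rightarrow> 'h set" where
  "ker_plus_lower r m = {x. X x = 0} + lower_part Hr (r + int m)"

lemma ker_plus_lower_submod: "submod UNIV sc (ker_plus_lower r m)"
  unfolding ker_plus_lower_def by (intro submod_plus kernel_submod lower_part_submod sc_add)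

lemma lower_part_sub_ker_plus_lower: "lower_part Hr r \<subseteq> ker_plus_lower r m"
proof
  fix x assume "x \<in> lower_part Hr r"
  then have "x \<in> lower_part Hr (r + int m)" using lower_part_mono[of r "r + int m" Hr Hr] by auto
  then have "0 + x \<in> ker_plus_lower r m"
    unfolding ker_plus_lower_def by (intro set_plus_intro) (simp_all add: module_hom.zero[OF X_hom])
  then show "x \<in> ker_plus_lower r m" by simp
qed

lemma ker_plus_lower_mono: "ker_plus_lower r m \<subseteq> ker_plus_lower r (Suc m)"
  unfolding ker_plus_lower_def by (intro set_plus_mono2 order_refl lower_part_mono) auto

text \<open>Everything mapped by \<open>X\<close> into \<open>H\<^sub><\<^sub>r\<close> lies in \<open>ker X + H\<^sub><\<^sub>r\<^sub>-\<^sub>d\<close>: the homogeneous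
  components of degree \<open>\<ge> r - d\<close> are killed by \<open>X\<close>, by uniqueness of decompositions.\<close>

lemma X_preimage_lower_part:
  assumes "X x \<in> lower_part Hr r"
  shows "x \<in> ker_plus_lower r (nat (- d))"
proof -
  obtain I f where If: "finite I" "\<forall>i\<in>I. f i \<in> Hr i" "x = (\<Sum>i\<in>I. f i)"
    using direct_sum_decomp_ex[OF Hr_decomp] by blast
  obtain K h where Kh: "finite K" "\<forall>k\<in>K. k < r \<and> h k \<in> Hr k" "X x = (\<Sum>k\<in>K. h k)"
    using assms unfolding lower_part_def by blast
  define J where "J = (\<lambda>i. i + d) ` I"
  define g where "g j = X (f (j - d))" for j
  have "(\<Sum>j\<in>J. g j) = (\<Sum>i\<in>I. g (i + d))"
    unfolding J_def by (rule sum.reindex_cong[of "\<lambda>i. i + d"]) (auto simp: inj_on_def)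
  also have "\<dots> = X x" unfolding g_def If(3) module_hom.sum[OF X_hom] by simp
  finally have X_decomp: "(\<Sum>j\<in>J. g j) = (\<Sum>k\<in>K. h k)" using Kh(3) by simp
  have killed: "X (f i) = 0" if "i \<in> I" "r \<le> i + d" for i
  proof -
    have "i + d \<in> J" "i + d \<notin> K" using that Kh(2) unfolding J_def by force+
    moreover have "finite J" "\<forall>j\<in>J. g j \<in> Hr j"
      unfolding J_def g_def using If(1,2) X_deg by auto
    ultimately have "g (i + d) = 0"
      using direct_sum_decomp_unique[OF Hr_decomp additive_subgroup_zero[OF Hr_subgroup], of J g K h]
        Kh X_decomp by blast
    then show ?thesis unfolding g_def by simp
  qed
  define A where "A = {i. i < r - d}"
  have "x = (\<Sum>i\<in>I - A. f i) + (\<Sum>i\<in>I \<inter> A. f i)"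
    using If(3) sum.Int_Diff[OF If(1), of f A] by (simp add: add.commute)
  moreover have "X (\<Sum>i\<in>I - A. f i) = 0"
    unfolding module_hom.sum[OF X_hom] using killed by (auto simp: A_def)
  moreover have "(\<Sum>i\<in>I \<inter> A. f i) \<in> lower_part Hr (r + int (nat (- d)))"
    using If(1,2) d_neg
    by (intro lower_part_sum[of Hr, OF Hr_subgroup]) (auto simp: A_def intro!: lower_part_component[of Hr, OF Hr_subgroup])
  ultimately show ?thesis unfolding ker_plus_lower_def by (metis mem_Collect_eq set_plus_intro)
qed

text \<open>\<open>(ker X + H\<^sub><\<^sub>r)/H\<^sub><\<^sub>r\<close> is a quotient of \<open>ker X/(ker X)\<^sub><\<^sub>r\<^sub>0\<close> when \<open>r\<^sub>0 \<le> r\<close>.\<close>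

lemma artinian_ker_plus_lower_0:
  assumes ker: "artinian_quot UNIV sc {x. X x = 0} (lower_part (\<lambda>i. Hr i \<inter> {x. X x = 0}) r0)"
    and "r0 \<le> r"
  shows "artinian_quot UNIV sc (ker_plus_lower r 0) (lower_part Hr r)"
proof (rule artinian_quot_by_cover[OF ker order_refl kernel_submod])
  show "lower_part (\<lambda>i. Hr i \<inter> {x. X x = 0}) r0 \<subseteq> lower_part Hr r"
    using \<open>r0 \<le> r\<close> by (intro lower_part_mono) auto
  show "lower_part (\<lambda>i. Hr i \<inter> {x. X x = 0}) r0 \<subseteq> {x. X x = 0}"
    by (intro lower_part_subset_subgroup submod_subgroup[OF kernel_submod]) auto
  show "ker_plus_lower r 0 \<subseteq> {x. X x = 0} + lower_part Hr r"
    unfolding ker_plus_lower_def by simp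
qed

text \<open>Each step \<open>(ker X + H\<^sub><\<^sub>r\<^sub>+\<^sub>m\<^sub>+\<^sub>1)/(ker X + H\<^sub><\<^sub>r\<^sub>+\<^sub>m)\<close> is a quotient of the single
  component \<open>H\<^sub>r\<^sub>+\<^sub>m\<close>, artinian over \<open>G\<^sub>0\<close>.\<close>

lemma artinian_ker_plus_lower_step:
  assumes art: "artinian_quot (Gr 0) sc (Hr (r + int m)) {0}"
  shows "artinian_quot UNIV sc (ker_plus_lower r (Suc m)) (ker_plus_lower r m)"
proof (rule artinian_quot_by_cover[OF art subset_UNIV])
  show "submod (Gr 0) sc (Hr (r + int m))"
    unfolding submod_def using Hr_subgroup sc_graded[of _ 0] by auto
  show "{0} \<subseteq> ker_plus_lower r m"
    using additive_subgroup_zero[OF submod_subgroup[OF ker_plus_lower_submod]] by blast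
  show "{0} \<subseteq> Hr (r + int m)" using additive_subgroup_zero[OF Hr_subgroup] by blast
  show "ker_plus_lower r (Suc m) \<subseteq> Hr (r + int m) + ker_plus_lower r m"
  proof
    fix x assume "x \<in> ker_plus_lower r (Suc m)"
    then obtain q l where ql: "x = q + l" "X q = 0" "l \<in> lower_part Hr (r + int (Suc m))"
      unfolding ker_plus_lower_def by (auto elim!: set_plus_elim)
    have "l \<in> lower_part Hr ((r + int m) + 1)" using ql(3) by (simp add: ac_simps)
    then obtain l' h where lh: "l' \<in> lower_part Hr (r + int m)" "h \<in> Hr (r + int m)" "l = l' + h"
      using lower_part_Suc_split[of Hr, OF Hr_subgroup] by blast
    have "q + l' \<in> ker_plus_lower r m" unfolding ker_plus_lower_def using ql(2) lh(1) by blast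
    moreover have "x = h + (q + l')" using ql(1) lh(3) by (simp add: ac_simps)
    ultimately show "x \<in> Hr (r + int m) + ker_plus_lower r m" using lh(2) by blast
  qed
qed

lemma artinian_ker_plus_lower:
  assumes ker: "artinian_quot UNIV sc {x. X x = 0} (lower_part (\<lambda>i. Hr i \<inter> {x. X x = 0}) r0)"
    and "r0 \<le> r" and components: "\<forall>i\<ge>r. artinian_quot (Gr 0) sc (Hr i) {0}"
  shows "artinian_quot UNIV sc (ker_plus_lower r m) (lower_part Hr r)"
proof (induction m)
  case 0
  show ?case using artinian_ker_plus_lower_0[OF ker \<open>r0 \<le> r\<close>] .
next
  case (Suc m)
  have "artinian_quot UNIV sc (ker_plus_lower r (Suc m)) (ker_plus_lower r m)"
    using artinian_ker_plus_lower_step components by simp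
  then show ?case
    by (rule artinian_quot_trans[OF Suc.IH _ ker_plus_lower_submod ker_plus_lower_submod
          lower_part_sub_ker_plus_lower ker_plus_lower_mono sc_add])
qed

text \<open>Choose \<open>r\<close> beyond both the degree where the components
  become artinian and the degree \<open>r\<^sub>0\<close> given by the kernel; then \<open>S = ker X + H\<^sub><\<^sub>r\<^sub>-\<^sub>d\<close>
  satisfies the hypotheses of the key criterion with \<open>L = H\<^sub><\<^sub>r\<close>.\<close>

lemma almost_artinian_poly_act:
  assumes H_art: "\<exists>N. \<forall>i\<ge>N. artinian_quot (Gr 0) sc (Hr i) {0}"
    and ker: "almost_artinian UNIV sc {x. X x = 0} (\<lambda>i. Hr i \<inter> {x. X x = 0})"
  shows "almost_artinian UNIV (poly_act sc X) UNIV Hr"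
proof -
  obtain N where N: "\<forall>i\<ge>N. artinian_quot (Gr 0) sc (Hr i) {0}" using H_art by blast
  obtain r0 where r0: "artinian_quot UNIV sc {x. X x = 0} (lower_part (\<lambda>i. Hr i \<inter> {x. X x = 0}) r0)"
    using ker unfolding almost_artinian_def by blast
  define r where "r = max N r0"
  have "r0 \<le> r" and components: "\<forall>i\<ge>r. artinian_quot (Gr 0) sc (Hr i) {0}"
    using N unfolding r_def by auto
  have S_art: "artinian_quot UNIV sc (ker_plus_lower r (nat (- d))) (lower_part Hr r)"
    using artinian_ker_plus_lower[OF r0 \<open>r0 \<le> r\<close> components] .
  have "artinian_quot UNIV (poly_act sc X) UNIV (lower_part Hr r)"
    by (rule artinian_quot_poly_act[OF sc_module X_hom lower_part_submod ker_plus_lower_submod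
          lower_part_sub_ker_plus_lower S_art X_preimage_lower_part X_nilpotent_mod_lower_part])
  then show ?thesis unfolding almost_artinian_def by blast
qed

end

theorem lemmaA3:
  fixes Gr :: "int \<Rightarrow> 'g::comm_ring_1 set"
    and sc :: "'g \<Rightarrow> 'h::ab_group_add \<Rightarrow> 'h"
    and Hr :: "int \<Rightarrow> 'h set"
    and X :: "'h \<Rightarrow> 'h"
  assumes G: "graded_ring Gr"
    and G_pos: "\<forall>i>0. Gr i = {0}"
    and H: "graded_module Gr sc Hr"
    and H_art: "\<exists>N. \<forall>i\<ge>N. artinian_quot (Gr 0) sc (Hr i) {0}"
    and X_lin: "module_hom sc sc X"
    and X_deg: "\<exists>d<0. \<forall>i. \<forall>x\<in>Hr i. X x \<in> Hr (i + d)"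
    and ker: "almost_artinian UNIV sc {x. X x = 0} (\<lambda>i. Hr i \<inter> {x. X x = 0})"
  shows "almost_artinian UNIV (poly_act sc X) UNIV Hr"
proof -
  obtain d where d: "d < 0" "\<forall>i. \<forall>x\<in>Hr i. X x \<in> Hr (i + d)" using X_deg by blast
  have "graded_endomorphism Gr sc Hr X d"
    by (rule graded_endomorphism.intro[OF G G_pos H X_lin d])
  from this H_art ker show ?thesis by (rule graded_endomorphism.almost_artinian_poly_act)
qed

end
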